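(* Let $(G_n)$ be a sequence of graphs with $\min_{v\in V}\delta_v=\omega(\log n)$, let $k\ge3$ be odd and $0\le p<p_k^\star$, and run the $(k,p,\mathcal B)$-Edge-Majority dynamics from the configuration in which every node is $\mathcal R$. Then for every constant $\gamma>0$ there exists a constant $T=T(p,k,\gamma)$ such that for every $K>0$, $$\Pr\Big(\forall t\in[0,T):\ \tfrac{\mathrm{vol}(R^{(t)})}{\mathrm{vol}(V)}\ge\varphi^+_{p,k}-\gamma,\ \text{ and }\ \forall t\in[T,n^K]:\ \tfrac{\mathrm{vol}(R^{(t)})}{\mathrm{vol}(V)}\in[\varphi^+_{p,k}-\gamma,\varphi^+_{p,k}+\gamma]\Big)=1-o(1).$$
   Context: $G_n=(V,E)$, $V=\{1,\dots,n\}$, $N(u)$ neighbourhood, $\delta_u=|N(u)|$, $\mathrm{vol}(S)=\sum_{v\in S}\delta_v$; asymptotics as $n\to\infty$. States in $\{\mathcal R,\mathcal B\}$; $R^{(t)}$ is the set of $\mathcal R$ nodes at round $t$. $(k,p,\mathcal B)$-Edge-Majority: in each round $t\ge1$ every node $u$ independently samples $k$ neighbours uniformly with replacement; for each sampled $v$, independently, $u$ sees $v$ as $\mathcal B$ with probability $p$ and otherwise sees $v$'s true state at round $t-1$; $u$ adopts the state seen more often. $F_{p,k}(x)=\Pr[\mathrm{Bin}(k,(1-p)x)\ge(k+1)/2]$. $p_k^\star\in[1/9,1/2)$ is the (unique) value such that for $0\le p<p_k^\star$, $F_{p,k}(x)=x$ on $[0,1]$ has exactly three solutions $0<\varphi^-_{p,k}<\varphi^+_{p,k}$,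 for $p=p_k^\star$ exactly two, and for $p>p_k^\star$ only $0$. *)

theory Defs
  imports "HOL-Probability.Probability" "HOL-Library.Landau_Symbols"
begin

definition is_graph :: "nat \<Rightarrow> (nat \<Rightarrow> nat set) \<Rightarrow> bool" where
  "is_graph n N \<longleftrightarrow> (\<forall>u\<in>{1..n}. N u \<subseteq> {1..n} \<and> u \<notin> N u \<and> (\<forall>v\<in>N u. u \<in> N v))"

definition degree :: "(nat \<Rightarrow> nat set) \<Rightarrow> nat \<Rightarrow> nat" where
  "degree N u = card (N u)"

definition min_degree :: "nat \<Rightarrow> (nat \<Rightarrow> nat set) \<Rightarrow> nat" where
  "min_degree n N = Min (degree N ` {1..n})"

definition vol :: "(nat \<Rightarrow> nat set) \<Rightarrow> nat set \<Rightarrow> real" where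
  "vol N S = (\<Sum>v\<in>S. real (degree N v))"

text \<open>One sample of node u: a uniformly random neighbour v, seen as B with probability p,
  otherwise seen with its true state. Result: True iff the sample is seen as R.\<close>
definition sample_seen_R :: "(nat \<Rightarrow> nat set) \<Rightarrow> real \<Rightarrow> nat set \<Rightarrow> nat \<Rightarrow> bool pmf" where
  "sample_seen_R N p R u =
     do { v \<leftarrow> pmf_of_set (N u); c \<leftarrow> bernoulli_pmf p; return_pmf (\<not> c \<and> v \<in> R) }"

definition node_update :: "(nat \<Rightarrow> nat set) \<Rightarrow> nat \<Rightarrow> real \<Rightarrow> nat set \<Rightarrow> nat \<Rightarrow> bool pmf" where
  "node_update N k p R u =
     map_pmf (\<lambda>f. card {i\<in>{..<k}. f i} > card {i\<in>{..<k}. \<not> f i})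
       (Pi_pmf {..<k} False (\<lambda>_. sample_seen_R N p R u))"

definition em_step :: "nat \<Rightarrow> (nat \<Rightarrow> nat set) \<Rightarrow> nat \<Rightarrow> real \<Rightarrow> nat set \<Rightarrow> nat set pmf" where
  "em_step n N k p R =
     map_pmf (\<lambda>g. {u\<in>{1..n}. g u}) (Pi_pmf {1..n} False (\<lambda>u. node_update N k p R u))"

text \<open>Joint law of the trajectory [R^{(0)}, ..., R^{(M)}] started from all nodes R.\<close>
primrec em_traj :: "nat \<Rightarrow> (nat \<Rightarrow> nat set) \<Rightarrow> nat \<Rightarrow> real \<Rightarrow> nat \<Rightarrow> nat set list pmf" where
  "em_traj n N k p 0 = return_pmf [{1..n}]"
| "em_traj n N k p (Suc M) =
     bind_pmf (em_traj n N k p M) (\<lambda>xs. map_pmf (\<lambda>y. xs @ [y]) (em_step n N k p (last xs)))"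

definition F :: "real \<Rightarrow> nat \<Rightarrow> real \<Rightarrow> real" where
  "F p k x = measure_pmf.prob (binomial_pmf k ((1 - p) * x)) {j. real j \<ge> (real k + 1) / 2}"

definition fixpoints :: "real \<Rightarrow> nat \<Rightarrow> real set" where
  "fixpoints p k = {x\<in>{0..1}. F p k x = x}"

definition p_star :: "nat \<Rightarrow> real" where
  "p_star k = (THE q. 1/9 \<le> q \<and> q < 1/2 \<and>
     (\<forall>p. 0 \<le> p \<and> p < q \<longrightarrow> card (fixpoints p k) = 3 \<and> 0 \<in> fixpoints p k) \<and>
     card (fixpoints q k) = 2 \<and>
     (\<forall>p. q < p \<and> p \<le> 1 \<longrightarrow> fixpoints p k = {0}))"

definition phi_plus :: "real \<Rightarrow> nat \<Rightarrow> real" where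
  "phi_plus p k = Max (fixpoints p k)"

end

theory Submission
  imports Defs "HOL-Real_Asymp.Real_Asymp"
begin

text \<open>Let \<open>G = majority_prob k\<close> be the probability that most of \<open>k\<close> coins of bias \<open>y\<close> show heads,
  so that \<open>F\<^sub>p\<^sub>,\<^sub>k(x) = G((1-p)x)\<close> and the positive fixed points of \<open>F\<close> correspond to the solutions
  \<open>y = (1-p)x\<close> of \<open>G(y)/y = 1/(1-p)\<close>. The ratio \<open>G(y)/y\<close> is unimodal on \<open>(0,1]\<close>: its
  derivative has the sign of \<open>y G'(y) - G(y)\<close>, which increases on \<open>[0,1/2]\<close> and then decreases
  to \<open>-1\<close>. Hence \<open>p\<^sub>k\<^sup>* = 1 - 1/max(G(y)/y)\<close>, and for \<open>p < p\<^sub>k\<^sup>*\<close> the largest fixed point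
  \<open>\<phi>\<^sup>+\<close> attracts every point above the middle one.

  In one round every node independently turns red with probability \<open>F\<close> of its fraction of red
  neighbours. By Hoeffding's inequality all fractions of the next round are within \<open>\<epsilon>\<close> of the
  corresponding neighbourhood averages of \<open>F\<close>, except with probability
  \<open>2n exp(-2\<epsilon>\<^sup>2\<delta>\<^sub>m\<^sub>i\<^sub>n) = n\<^bsup>-\<omega>(1)\<^esup>\<close>. A union bound over \<open>n\<^sup>K\<close> rounds keeps all fractions inside a
  deterministic envelope that is invariant under \<open>F\<close> up to \<open>\<epsilon>\<close> and shrinks into
  \<open>[\<phi>\<^sup>+ - \<gamma>, \<phi>\<^sup>+ + \<gamma>]\<close> within \<open>T\<close> rounds; \<open>vol(R)/vol(V)\<close> is a degree-weighted average of
  the fractions.\<close>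

definition majority_prob :: "nat \<Rightarrow> real \<Rightarrow> real" where
  "majority_prob k y = (\<Sum>j\<in>{Suc (k div 2)..k}. real (k choose j) * y^j * (1-y)^(k-j))"

lemma majority_prob_eq_binomial_tail:
  assumes "odd k" "y \<in> {0..1}"
  shows "majority_prob k y = measure_pmf.prob (binomial_pmf k y) {j. real j \<ge> (real k + 1) / 2}"
proof -
  have "{j. real j \<ge> (real k + 1) / 2} \<inter> set_pmf (binomial_pmf k y)
      = {Suc (k div 2)..k} \<inter> set_pmf (binomial_pmf k y)"
    using assms by (auto simp: set_pmf_binomial_eq elim!: oddE split: if_splits)
  then have "measure_pmf.prob (binomial_pmf k y) {j. real j \<ge> (real k + 1) / 2}
      = measure_pmf.prob (binomial_pmf k y) {Suc (k div 2)..k}"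
    by (metis measure_Int_set_pmf)
  also have "\<dots> = majority_prob k y"
    using assms by (simp add: measure_measure_pmf_finite majority_prob_def)
  finally show ?thesis by simp
qed

lemma F_eq_majority_prob:
  assumes "odd k" "(1-p)*x \<in> {0..1}"
  shows "F p k x = majority_prob k ((1-p)*x)"
  using majority_prob_eq_binomial_tail[OF assms] by (simp add: F_def)

lemma binomial_term_has_real_derivative:
  assumes "n = j + Suc i"
  shows "((\<lambda>y. real (Suc n choose Suc j) * (y^(Suc j) * (1-y)^(Suc i))) has_real_derivative
    real (Suc n) * (real (n choose j) * y^j * (1-y)^(Suc i)
      - real (n choose Suc j) * y^(Suc j) * (1-y)^i)) (at y)"
proof -
  have d1: "((\<lambda>y. y^(Suc j)) has_real_derivative real (Suc j) * y^j) (at y)"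
    using DERIV_pow[of "Suc j" y] by simp
  have d2: "((\<lambda>y. (1-y)^(Suc i)) has_real_derivative real (Suc i) * (1-y)^i * (-1)) (at y)"
    by (rule DERIV_cong[OF DERIV_power[OF DERIV_diff[OF DERIV_const DERIV_ident]]]) simp
  have id1: "real (Suc n choose Suc j) * real (Suc j) = real (Suc n) * real (n choose j)"
    by (metis Suc_times_binomial_eq of_nat_mult)
  have id2: "real (Suc n choose Suc j) * real (Suc i) = real (Suc n) * real (n choose Suc j)"
    using binomial_absorb_comp[of "Suc n" "Suc j"] assms
    by (metis diff_Suc_1 diff_Suc_Suc add_diff_cancel_left' of_nat_mult mult.commute)
  have "real (Suc n choose Suc j)
        * (real (Suc j) * y^j * (1-y)^(Suc i) + real (Suc i) * (1-y)^i * (-1) * y^(Suc j))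
      = (real (Suc n choose Suc j) * real (Suc j)) * y^j * (1-y)^(Suc i)
        - (real (Suc n choose Suc j) * real (Suc i)) * y^(Suc j) * (1-y)^i"
    by (simp add: algebra_simps)
  also have "\<dots> = real (Suc n)
      * (real (n choose j) * y^j * (1-y)^(Suc i) - real (n choose Suc j) * y^(Suc j) * (1-y)^i)"
    unfolding id1 id2 by (simp add: algebra_simps)
  finally show ?thesis
    using DERIV_cmult[OF DERIV_mult[OF d1 d2], of "real (Suc n choose Suc j)"] by simp
qed

text \<open>The term-by-term derivatives telescope (\<open>binomial_term_has_real_derivative\<close>).\<close>
lemma binomial_upper_tail_has_real_derivative:
  fixes n i :: nat
  assumes "i \<le> n"
  shows "((\<lambda>y. \<Sum>j\<in>{n-i+1..n+1}. real (Suc n choose j) * y^j * (1-y)^(Suc n - j)) has_real_derivative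
          (real (Suc n) * real (n choose (n-i)) * y^(n-i) * (1-y)^i)) (at y)"
  using assms
proof (induction i)
  case 0
  show ?case using DERIV_pow[of "Suc n" y] by simp
next
  case (Suc i)
  then obtain j where n: "n = j + Suc i" by (metis le_iff_add add.commute)
  let ?S = "\<lambda>i y. \<Sum>j\<in>{n-i+1..n+1}. real (Suc n choose j) * y^j * (1-y)^(Suc n - j)"
  have split: "?S (Suc i) = (\<lambda>y. real (Suc n choose Suc j) * (y^(Suc j) * (1-y)^(Suc i)) + ?S i y)"
  proof
    fix y
    have "{n - Suc i + 1..n + 1} = insert (Suc j) {n-i+1..n+1}" "Suc j \<notin> {n-i+1..n+1}"
      "Suc n - Suc j = Suc i"
      using n by auto
    then show "?S (Suc i) y = real (Suc n choose Suc j) * (y^(Suc j) * (1-y)^(Suc i)) + ?S i y"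
      by (simp only: sum.insert[OF finite_atLeastAtMost]) simp
  qed
  have IH: "(?S i has_real_derivative real (Suc n) * real (n choose (Suc j)) * y^(Suc j) * (1-y)^i) (at y)"
    using Suc.IH Suc.prems n by (simp add: Suc_diff_le)
  have "n - Suc i = j" using n by simp
  then have "real (Suc n)
        * (real (n choose j) * y^j * (1-y)^(Suc i) - real (n choose Suc j) * y^(Suc j) * (1-y)^i)
      + real (Suc n) * real (n choose (Suc j)) * y^(Suc j) * (1-y)^i
      = real (Suc n) * real (n choose (n - Suc i)) * y^(n - Suc i) * (1-y)^(Suc i)"
    by (simp add: algebra_simps)
  then show ?case
    unfolding split using DERIV_add[OF binomial_term_has_real_derivative[OF n] IH] by simp
qed

lemma majority_prob_has_real_derivative:
  assumes "k = 2*m+1"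
  shows "(majority_prob k has_real_derivative real k * real (2*m choose m) * y^m * (1-y)^m) (at y)"
proof -
  have "majority_prob k = (\<lambda>y. \<Sum>j\<in>{2*m-m+1..2*m+1}. real (Suc (2*m) choose j) * y^j * (1-y)^(Suc (2*m) - j))"
    unfolding majority_prob_def assms by (intro ext sum.cong) auto
  then show ?thesis using binomial_upper_tail_has_real_derivative[of m "2*m" y] assms by simp
qed

text \<open>Equivalently \<open>G(3/4)/(3/4) \<ge> 9/8\<close>: this is where the bound \<open>1/9 \<le> p\<^sub>k\<^sup>*\<close> required by
  the definition of \<^const>\<open>p_star\<close> comes from.\<close>
lemma majority_prob_three_quarters_ge:
  assumes "odd k" "k \<ge> 3"
  shows "majority_prob k (3/4) \<ge> 27/32"
proof (cases "k \<ge> 11")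
  case True
  let ?B = "binomial_pmf k (3/4)"
  have bd: "binomial_distribution (3/4::real)" by unfold_locales auto
  have "- {j. real j \<ge> (real k + 1) / 2} \<subseteq> {j. real j \<le> real k * (3/4) - (real k + 2)/4}"
  proof
    fix j assume "j \<in> - {j. real j \<ge> (real k + 1) / 2}"
    then have "2 * j < k + 1" by simp
    then have "2 * j + 1 \<le> k" using \<open>odd k\<close> by presburger
    then have "2 * real j + 1 \<le> real k" by linarith
    then show "j \<in> {j. real j \<le> real k * (3/4) - (real k + 2)/4}" by (simp add: field_simps)
  qed
  then have "measure_pmf.prob ?B (- {j. real j \<ge> (real k + 1) / 2})
      \<le> measure_pmf.prob ?B {j. real j \<le> real k * (3/4) - (real k + 2)/4}"
    by (intro measure_pmf.finite_measure_mono) auto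
  also have "\<dots> \<le> exp (- 2 * ((real k + 2)/4)\<^sup>2 / real k)"
    using binomial_distribution.prob_le[OF bd, of k "(real k + 2)/4"] True by simp
  also have "\<dots> \<le> exp (- (48/25))"
  proof -
    have "(real k - 11) * (25 * real k - 9) \<ge> 0" using True by simp
    then have "48/25 \<le> 2 * ((real k + 2)/4)\<^sup>2 / real k"
      using True by (simp add: field_simps power2_eq_square)
    then show ?thesis by simp
  qed
  also have "\<dots> \<le> 5/32"
  proof -
    have "(32/5::real) \<le> (1 + (48/25) / real (32::nat)) ^ 32" by (simp add: power_divide)
    also have "\<dots> \<le> exp (48/25)" by (rule exp_ge_one_plus_x_over_n_power_n) auto
    finally show ?thesis by (simp add: exp_minus field_simps)
  qed
  finally show ?thesis
    using majority_prob_eq_binomial_tail[OF \<open>odd k\<close>, of "3/4"] measure_pmf.prob_compl[of _ ?B]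
    by (simp add: Compl_eq_Diff_UNIV)
next
  case False
  with assms have "k = 3 \<or> k = 5 \<or> k = 7 \<or> k = 9" by presburger
  then show ?thesis unfolding majority_prob_def by (elim disjE; simp only:; code_simp)
qed

locale odd_majority =
  fixes k m :: nat
  assumes k_eq: "k = 2*m+1" and m_pos: "1 \<le> m"
begin

definition majority_density :: "real \<Rightarrow> real" where
  "majority_density y = real k * real (2*m choose m) * y^m * (1-y)^m"

definition ratio :: "real \<Rightarrow> real" where
  "ratio y = majority_prob k y / y"

definition ratio_numer :: "real \<Rightarrow> real" where
  "ratio_numer y = y * majority_density y - majority_prob k y"

lemma majority_prob_deriv: "(majority_prob k has_real_derivative majority_density y) (at y)"
  unfolding majority_density_def by (rule majority_prob_has_real_derivative[OF k_eq])

lemma majority_prob_continuous_on: "continuous_on A (majority_prob k)"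
  by (meson DERIV_isCont majority_prob_deriv continuous_at_imp_continuous_on)

lemma majority_prob_0: "majority_prob k 0 = 0"
  unfolding majority_prob_def using k_eq by (intro sum.neutral) auto

lemma majority_prob_1: "majority_prob k 1 = 1"
proof -
  have "majority_prob k 1 = (\<Sum>j\<in>{Suc m..k}. if j = k then 1 else 0)"
    unfolding majority_prob_def using k_eq by (intro sum.cong) auto
  then show ?thesis using k_eq by simp
qed

lemma majority_density_pos: "0 < y \<Longrightarrow> y < 1 \<Longrightarrow> majority_density y > 0"
  unfolding majority_density_def using k_eq by (simp add: zero_less_binomial)

lemma majority_prob_strict_mono:
  assumes "0 \<le> a" "a < b" "b \<le> 1"
  shows "majority_prob k a < majority_prob k b"
proof (rule DERIV_pos_imp_increasing_open[OF \<open>a < b\<close>])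
  fix x assume "a < x" "x < b"
  then show "\<exists>y. (majority_prob k has_real_derivative y) (at x) \<and> 0 < y"
    using assms majority_prob_deriv majority_density_pos
    by (intro exI[of _ "majority_density x"]) auto
qed (rule majority_prob_continuous_on)

lemma majority_prob_mono: "0 \<le> a \<Longrightarrow> a \<le> b \<Longrightarrow> b \<le> 1 \<Longrightarrow> majority_prob k a \<le> majority_prob k b"
  using majority_prob_strict_mono by (cases "a = b") (auto simp: less_eq_real_def)

lemma majority_prob_bounds: "0 \<le> y \<Longrightarrow> y \<le> 1 \<Longrightarrow> 0 \<le> majority_prob k y \<and> majority_prob k y \<le> 1"
  using majority_prob_mono[of 0 y] majority_prob_mono[of y 1] majority_prob_0 majority_prob_1 by auto

lemma majority_prob_less_1: "0 \<le> y \<Longrightarrow> y < 1 \<Longrightarrow> majority_prob k y < 1"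
  using majority_prob_strict_mono[of y 1] majority_prob_1 by auto

lemma ratio_numer_deriv:
  "(ratio_numer has_real_derivative
     real k * real (2*m choose m) * real m * y^m * (1-y)^(m-1) * (1 - 2*y)) (at y)"
proof -
  obtain m' where m': "m = Suc m'" using m_pos by (cases m) auto
  let ?c = "real k * real (2*m choose m)"
  have d1: "((\<lambda>y. y^(Suc m)) has_real_derivative real (Suc m) * y^m) (at y)"
    using DERIV_pow[of "Suc m" y] by simp
  have d2: "((\<lambda>y. (1-y)^m) has_real_derivative real m * (1-y)^m' * (-1)) (at y)"
    by (rule DERIV_cong[OF DERIV_power[OF DERIV_diff[OF DERIV_const DERIV_ident]]]) (simp add: m')
  have "ratio_numer = (\<lambda>y. ?c * (y^(Suc m) * (1-y)^m) - majority_prob k y)"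
    unfolding ratio_numer_def majority_density_def by (auto simp: algebra_simps)
  moreover have "((\<lambda>y. ?c * (y^(Suc m) * (1-y)^m) - majority_prob k y) has_real_derivative
      ?c * (real (Suc m) * y^m * (1-y)^m + real m * (1-y)^m' * (-1) * y^(Suc m))
      - majority_density y) (at y)"
    by (intro DERIV_diff DERIV_cmult DERIV_mult d1 d2 majority_prob_deriv)
  moreover have "?c * (real (Suc m) * y^m * (1-y)^m + real m * (1-y)^m' * (-1) * y^(Suc m))
      - majority_density y = ?c * real m * y^m * (1-y)^(m-1) * (1 - 2*y)"
    unfolding majority_density_def by (simp add: m' algebra_simps)
  ultimately show ?thesis by simp
qed

lemma ratio_numer_continuous_on: "continuous_on A ratio_numer"
  by (meson DERIV_isCont ratio_numer_deriv continuous_at_imp_continuous_on)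

lemma ratio_numer_strict_mono:
  assumes "0 \<le> a" "a < b" "b \<le> 1/2"
  shows "ratio_numer a < ratio_numer b"
proof (rule DERIV_pos_imp_increasing_open[OF \<open>a < b\<close>])
  fix x assume "a < x" "x < b"
  then have "real k * real (2*m choose m) * real m * x^m * (1-x)^(m-1) * (1 - 2*x) > 0"
    using assms k_eq m_pos by (intro mult_pos_pos) (auto simp: zero_less_binomial)
  then show "\<exists>y. (ratio_numer has_real_derivative y) (at x) \<and> 0 < y"
    using ratio_numer_deriv by blast
qed (rule ratio_numer_continuous_on)

lemma ratio_numer_strict_antimono:
  assumes "1/2 \<le> a" "a < b" "b \<le> 1"
  shows "ratio_numer b < ratio_numer a"
proof (rule DERIV_neg_imp_decreasing_open[OF \<open>a < b\<close>])
  fix x assume "a < x" "x < b"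
  then have "real k * real (2*m choose m) * real m * x^m * (1-x)^(m-1) > 0" "1 - 2*x < 0"
    using assms k_eq m_pos by (auto simp: zero_less_binomial)
  then show "\<exists>y. (ratio_numer has_real_derivative y) (at x) \<and> y < 0"
    using ratio_numer_deriv[of x] mult_pos_neg by blast
qed (rule ratio_numer_continuous_on)

lemma ratio_numer_0: "ratio_numer 0 = 0"
  unfolding ratio_numer_def by (simp add: majority_prob_0)

lemma ratio_numer_1: "ratio_numer 1 = -1"
  unfolding ratio_numer_def majority_density_def using majority_prob_1 m_pos by simp

lemma ratio_numer_has_zero: "\<exists>y. 1/2 < y \<and> y < 1 \<and> ratio_numer y = 0"
proof -
  have half: "ratio_numer (1/2) > 0"
    using ratio_numer_strict_mono[of 0 "1/2"] ratio_numer_0 by simp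
  obtain y where y: "1/2 \<le> y" "y \<le> 1" "ratio_numer y = 0"
    using IVT2[of ratio_numer 1 0 "1/2"] half ratio_numer_1 ratio_numer_deriv DERIV_isCont by fastforce
  moreover have "y \<noteq> 1/2"
  proof
    assume "y = 1/2"
    with half y(3) show False by simp
  qed
  moreover have "y \<noteq> 1" using ratio_numer_1 y(3) by auto
  ultimately show ?thesis by force
qed

definition y_crit :: real where
  "y_crit = (SOME y. 1/2 < y \<and> y < 1 \<and> ratio_numer y = 0)"

lemma y_crit: "1/2 < y_crit" "y_crit < 1" "ratio_numer y_crit = 0"
  using someI_ex[OF ratio_numer_has_zero] unfolding y_crit_def by auto

lemma ratio_numer_pos: "0 < y \<Longrightarrow> y < y_crit \<Longrightarrow> ratio_numer y > 0"
  using ratio_numer_strict_mono[of 0 y] ratio_numer_strict_antimono[of y y_crit] ratio_numer_0 y_crit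
  by (cases "y \<le> 1/2") auto

lemma ratio_numer_neg: "y_crit < y \<Longrightarrow> y \<le> 1 \<Longrightarrow> ratio_numer y < 0"
  using ratio_numer_strict_antimono[of y_crit y] y_crit by simp

lemma ratio_deriv: "y \<noteq> 0 \<Longrightarrow> (ratio has_real_derivative ratio_numer y / y^2) (at y)"
  unfolding ratio_def[abs_def] ratio_numer_def
  by (rule DERIV_cong[OF DERIV_divide[OF majority_prob_deriv DERIV_ident]])
     (auto simp: power2_eq_square algebra_simps)

lemma ratio_continuous_on: "0 < a \<Longrightarrow> continuous_on {a..b} ratio"
  by (intro continuous_at_imp_continuous_on ballI DERIV_isCont[OF ratio_deriv]) auto

lemma ratio_strict_mono:
  assumes "0 < a" "a < b" "b \<le> y_crit"
  shows "ratio a < ratio b"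
proof (rule DERIV_pos_imp_increasing_open[OF \<open>a < b\<close>])
  fix x assume "a < x" "x < b"
  then show "\<exists>y. (ratio has_real_derivative y) (at x) \<and> 0 < y"
    using assms ratio_numer_pos ratio_deriv by (intro exI[of _ "ratio_numer x / x^2"]) auto
qed (use assms ratio_continuous_on in auto)

lemma ratio_strict_antimono:
  assumes "y_crit \<le> a" "a < b" "b \<le> 1"
  shows "ratio b < ratio a"
proof (rule DERIV_neg_imp_decreasing_open[OF \<open>a < b\<close>])
  fix x assume "a < x" "x < b"
  then show "\<exists>y. (ratio has_real_derivative y) (at x) \<and> y < 0"
    using assms ratio_numer_neg ratio_deriv y_crit
    by (intro exI[of _ "ratio_numer x / x^2"]) (auto simp: divide_neg_pos)
qed (use assms y_crit ratio_continuous_on in auto)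

definition ratio_max :: real where
  "ratio_max = ratio y_crit"

lemma ratio_less_max: "0 < y \<Longrightarrow> y \<le> 1 \<Longrightarrow> y \<noteq> y_crit \<Longrightarrow> ratio y < ratio_max"
  unfolding ratio_max_def using ratio_strict_mono[of y y_crit] ratio_strict_antimono[of y_crit y]
  by (cases "y < y_crit") auto

lemma ratio_le_max: "0 < y \<Longrightarrow> y \<le> 1 \<Longrightarrow> ratio y \<le> ratio_max"
  using ratio_less_max[of y] unfolding ratio_max_def by (cases "y = y_crit") auto

lemma y_crit_mult_ratio_max_less_1: "y_crit * ratio_max < 1"
  unfolding ratio_max_def ratio_def using majority_prob_less_1[of y_crit] y_crit by simp

lemma ratio_le_linear: "0 < y \<Longrightarrow> y \<le> 1 \<Longrightarrow> ratio y \<le> 2^k * y"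
proof -
  assume y: "0 < y" "y \<le> 1"
  have "majority_prob k y \<le> (\<Sum>j\<in>{Suc (k div 2)..k}. real (k choose j) * y^2)"
    unfolding majority_prob_def
  proof (intro sum_mono)
    fix j assume j: "j \<in> {Suc (k div 2)..k}"
    have "y^j * (1-y)^(k-j) \<le> y^2 * 1"
      using j m_pos y k_eq by (intro mult_mono power_decreasing power_le_one) auto
    then show "real (k choose j) * y^j * (1-y)^(k-j) \<le> real (k choose j) * y^2"
      by (simp add: mult.assoc mult_left_mono)
  qed
  also have "\<dots> = real (\<Sum>j\<in>{Suc (k div 2)..k}. (k choose j)) * y^2"
    by (simp add: sum_distrib_right)
  also have "\<dots> \<le> 2^k * y^2"
  proof -
    have "(\<Sum>j\<in>{Suc (k div 2)..k}. (k choose j)) \<le> (\<Sum>j\<le>k. (k choose j))"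
      by (intro sum_mono2) auto
    then have "real (\<Sum>j\<in>{Suc (k div 2)..k}. (k choose j)) \<le> 2^k"
      unfolding choose_row_sum by (metis of_nat_le_iff of_nat_numeral of_nat_power)
    then show ?thesis by (intro mult_right_mono) auto
  qed
  finally show ?thesis unfolding ratio_def using y by (simp add: field_simps power2_eq_square)
qed

lemma ratio_max_ge: "ratio_max \<ge> 9/8"
  using majority_prob_three_quarters_ge[of k] ratio_le_max[of "3/4"] k_eq m_pos
  unfolding ratio_def by simp

lemma ratio_max_less_2: "ratio_max < 2"
proof -
  have "ratio_max * (1/2) < ratio_max * y_crit"
    using y_crit ratio_max_ge by (intro mult_strict_left_mono) auto
  then show ?thesis using y_crit_mult_ratio_max_less_1 by (simp add: mult.commute)
qed


definition p_crit :: real where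
  "p_crit = 1 - 1 / ratio_max"

lemma p_crit_bounds: "1/9 \<le> p_crit" "p_crit < 1/2"
  using ratio_max_ge ratio_max_less_2 unfolding p_crit_def by (auto simp: field_simps)

lemma y_crit_less_one_minus_p_crit: "y_crit < 1 - p_crit"
  using y_crit_mult_ratio_max_less_1 ratio_max_ge unfolding p_crit_def by (simp add: field_simps)

lemma F_eq: "0 \<le> p \<Longrightarrow> p \<le> 1 \<Longrightarrow> 0 \<le> x \<Longrightarrow> x \<le> 1 \<Longrightarrow> F p k x = majority_prob k ((1-p)*x)"
  using k_eq by (intro F_eq_majority_prob) (auto intro: mult_le_one)

lemma F_0: "0 \<le> p \<Longrightarrow> p \<le> 1 \<Longrightarrow> F p k 0 = 0"
  using F_eq[of p 0] majority_prob_0 by simp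

lemma F_minus_self_sgn:
  assumes "0 \<le> p" "p < 1" "0 < x" "x \<le> 1"
  shows "sgn (F p k x - x) = sgn (ratio ((1-p)*x) - 1/(1-p))"
proof -
  have "F p k x - x = (1-p)*x * (ratio ((1-p)*x) - 1/(1-p))"
    using assms F_eq[of p x] unfolding ratio_def by (simp add: right_diff_distrib)
  then show ?thesis using assms by (simp add: sgn_mult)
qed

lemma
  assumes "0 \<le> p" "p < 1" "0 < x" "x \<le> 1"
  shows F_eq_self_iff: "F p k x = x \<longleftrightarrow> ratio ((1-p)*x) = 1/(1-p)"
    and F_gt_self_iff: "F p k x > x \<longleftrightarrow> ratio ((1-p)*x) > 1/(1-p)"
    and F_lt_self_iff: "F p k x < x \<longleftrightarrow> ratio ((1-p)*x) < 1/(1-p)"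
  using F_minus_self_sgn[OF assms] by (auto simp: sgn_if split: if_splits)

lemma positive_fixpoint_iff:
  assumes "0 \<le> p" "p < 1"
  shows "x \<in> fixpoints p k - {0} \<longleftrightarrow> (\<exists>y. 0 < y \<and> y \<le> 1-p \<and> ratio y = 1/(1-p) \<and> x = y/(1-p))"
proof
  assume "x \<in> fixpoints p k - {0}"
  then have "0 < x" "x \<le> 1" "F p k x = x" unfolding fixpoints_def by auto
  with assms show "\<exists>y. 0 < y \<and> y \<le> 1-p \<and> ratio y = 1/(1-p) \<and> x = y/(1-p)"
    by (intro exI[of _ "(1-p)*x"]) (auto simp: F_eq_self_iff)
next
  assume "\<exists>y. 0 < y \<and> y \<le> 1-p \<and> ratio y = 1/(1-p) \<and> x = y/(1-p)"
  then obtain y where y: "0 < y" "y \<le> 1-p" "ratio y = 1/(1-p)" and x: "x = y/(1-p)" by blast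
  have "0 < x" "x \<le> 1" "(1-p)*x = y" using y assms unfolding x by auto
  with y assms show "x \<in> fixpoints p k - {0}"
    unfolding fixpoints_def by (auto simp: F_eq_self_iff)
qed

lemma zero_in_fixpoints: "0 \<le> p \<Longrightarrow> p \<le> 1 \<Longrightarrow> 0 \<in> fixpoints p k"
  unfolding fixpoints_def using F_0 by auto

lemma ratio_eq_cases:
  assumes "0 < y1" "y1 \<le> y_crit" "y_crit \<le> y2" "y2 \<le> 1" "ratio y1 = ratio y2"
    and "0 < y" "y \<le> 1" "ratio y = ratio y1"
  shows "y = y1 \<or> y = y2"
proof (cases "y \<le> y_crit")
  case True
  then show ?thesis using ratio_strict_mono[of y y1] ratio_strict_mono[of y1 y] assms
    by (cases y y1 rule: linorder_cases) auto
next
  case False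
  then show ?thesis using ratio_strict_antimono[of y y2] ratio_strict_antimono[of y2 y] assms
    by (cases y y2 rule: linorder_cases) auto
qed

lemma fixpoints_below_p_crit:
  assumes "0 \<le> p" "p < p_crit"
  obtains y1 y2 where "0 < y1" "y1 < y_crit" "y_crit < y2" "y2 \<le> 1 - p"
    "ratio y1 = 1/(1-p)" "ratio y2 = 1/(1-p)" "fixpoints p k = {0, y1/(1-p), y2/(1-p)}"
proof -
  define L where "L = 1/(1-p)"
  have p_half: "p < 1/2" using assms p_crit_bounds by auto
  have L: "1 \<le> L" "L < ratio_max"
    using assms p_half ratio_max_ge unfolding L_def p_crit_def by (auto simp: field_simps)
  have y_crit_less: "y_crit < 1 - p" using y_crit_less_one_minus_p_crit assms by simp
  define y0 where "y0 = min (y_crit/2) (1/2^k)"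
  have y0: "0 < y0" "y0 < y_crit" using y_crit by (auto simp: y0_def)
  have "ratio y0 \<le> 2^k * y0" using ratio_le_linear[of y0] y0 y_crit by auto
  also have "\<dots> \<le> 1" unfolding y0_def by (auto simp: field_simps min_def)
  finally obtain y1 where y1: "y0 \<le> y1" "y1 \<le> y_crit" "ratio y1 = L"
    using IVT'[of ratio y0 L y_crit] L y0 ratio_continuous_on[of y0 y_crit] unfolding ratio_max_def by auto
  have "ratio (1-p) \<le> L"
    unfolding ratio_def L_def using majority_prob_bounds[of "1-p"] assms p_half
    by (auto simp: divide_right_mono)
  then obtain y2 where y2: "y_crit \<le> y2" "y2 \<le> 1-p" "ratio y2 = L"
    using IVT2'[of ratio "1-p" L y_crit] L y_crit_less y_crit ratio_continuous_on[of y_crit "1-p"]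
    unfolding ratio_max_def by auto
  have ne: "y1 \<noteq> y_crit" "y2 \<noteq> y_crit" using y1 y2 L unfolding ratio_max_def by auto
  have "y = y1 \<or> y = y2" if "0 < y" "y \<le> 1-p" "ratio y = L" for y
    using ratio_eq_cases[of y1 y2 y] that y0 y1 y2 assms by auto
  then have "fixpoints p k - {0} = {y1/(1-p), y2/(1-p)}"
    unfolding set_eq_iff positive_fixpoint_iff[OF assms(1) p_half[THEN less_trans, of 1, simplified]]
    using y0 y1 y2 L_def by auto
  then have "fixpoints p k = {0, y1/(1-p), y2/(1-p)}"
    using zero_in_fixpoints[of p] assms p_half by auto
  moreover have "0 < y1" "y1 < y_crit" "y_crit < y2" using y0 y1 y2 ne by auto
  ultimately show ?thesis by (intro that[of y1 y2]) (use y1 y2 L_def in auto)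
qed

lemma fixpoints_p_crit: "fixpoints p_crit k = {0, y_crit / (1 - p_crit)}"
proof -
  have q: "0 \<le> p_crit" "p_crit < 1" using p_crit_bounds by auto
  have L: "1/(1 - p_crit) = ratio_max" unfolding p_crit_def using ratio_max_ge by simp
  have "y_crit \<le> 1 - p_crit" using y_crit_less_one_minus_p_crit by simp
  moreover have "y = y_crit" if "0 < y" "y \<le> 1 - p_crit" "ratio y = ratio_max" for y
    using that ratio_less_max[of y] q by force
  ultimately have "fixpoints p_crit k - {0} = {y_crit / (1 - p_crit)}"
    unfolding set_eq_iff positive_fixpoint_iff[OF q] L using y_crit unfolding ratio_max_def by auto
  then show ?thesis using zero_in_fixpoints[of p_crit] q by auto
qed

lemma fixpoints_above_p_crit:
  assumes "p_crit < p" "p \<le> 1"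
  shows "fixpoints p k = {0}"
proof (cases "p = 1")
  case True
  then show ?thesis
    unfolding fixpoints_def using F_eq[of 1] majority_prob_0 by auto
next
  case False
  have p: "0 \<le> p" "p < 1" using assms False p_crit_bounds by auto
  have "ratio_max < 1/(1-p)"
    using assms p ratio_max_ge unfolding p_crit_def by (simp add: field_simps)
  then have "fixpoints p k - {0} = {}"
    unfolding set_eq_iff positive_fixpoint_iff[OF p] using ratio_le_max p by force
  then show ?thesis using zero_in_fixpoints[of p] p by auto
qed

lemma p_star_eq_p_crit: "p_star k = p_crit"
  unfolding p_star_def
proof (rule the_equality)
  have card_crit: "card (fixpoints p_crit k) = 2"
    unfolding fixpoints_p_crit using y_crit p_crit_bounds by simp
  have "card (fixpoints p k) = 3" if p: "0 \<le> p" "p < p_crit" for p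
  proof -
    obtain y1 y2 where "0 < y1" "y1 < y_crit" "y_crit < y2" "y2 \<le> 1 - p"
      and "fixpoints p k = {0, y1/(1-p), y2/(1-p)}"
      using fixpoints_below_p_crit[OF p] by blast
    moreover have "1 - p > 0" using p p_crit_bounds by simp
    ultimately show ?thesis by (simp add: divide_strict_right_mono)
  qed
  then show "1/9 \<le> p_crit \<and> p_crit < 1/2 \<and>
     (\<forall>p. 0 \<le> p \<and> p < p_crit \<longrightarrow> card (fixpoints p k) = 3 \<and> 0 \<in> fixpoints p k) \<and>
     card (fixpoints p_crit k) = 2 \<and>
     (\<forall>p. p_crit < p \<and> p \<le> 1 \<longrightarrow> fixpoints p k = {0})"
    using p_crit_bounds card_crit fixpoints_above_p_crit zero_in_fixpoints by auto
next
  fix q assume q: "1/9 \<le> q \<and> q < 1/2 \<and>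
     (\<forall>p. 0 \<le> p \<and> p < q \<longrightarrow> card (fixpoints p k) = 3 \<and> 0 \<in> fixpoints p k) \<and>
     card (fixpoints q k) = 2 \<and>
     (\<forall>p. q < p \<and> p \<le> 1 \<longrightarrow> fixpoints p k = {0})"
  show "q = p_crit"
  proof (rule linorder_cases[of q p_crit])
    assume "q < p_crit"
    then have "fixpoints p_crit k = {0}" using q p_crit_bounds by auto
    then show ?thesis using fixpoints_p_crit y_crit p_crit_bounds by simp
  next
    assume "p_crit < q"
    then have "fixpoints q k = {0}" using q fixpoints_above_p_crit by auto
    then show ?thesis using q by simp
  qed
qed

end

lemma odd_majorityI: "odd k \<Longrightarrow> 3 \<le> k \<Longrightarrow> odd_majority k (k div 2)"
  by unfold_locales (auto elim: oddE)

lemma p_star_less_half: "odd k \<Longrightarrow> 3 \<le> k \<Longrightarrow> p_star k < 1/2"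
  using odd_majority.p_star_eq_p_crit odd_majority.p_crit_bounds odd_majorityI by metis

context
  fixes k :: nat and p :: real
  assumes k: "odd k" "3 \<le> k" and p: "0 \<le> p" "p \<le> 1"
begin

interpretation odd_majority k "k div 2"
  using k by (rule odd_majorityI)

lemma F_mono: "0 \<le> x \<Longrightarrow> x \<le> y \<Longrightarrow> y \<le> 1 \<Longrightarrow> F p k x \<le> F p k y"
  using p by (simp add: F_eq majority_prob_mono mult_left_mono mult_le_one)

lemma F_bounds: "0 \<le> x \<Longrightarrow> x \<le> 1 \<Longrightarrow> 0 \<le> F p k x \<and> F p k x \<le> 1"
  using p by (simp add: F_eq majority_prob_bounds mult_le_one)

lemma F_continuous_on: "continuous_on {0..1} (F p k)"
proof -
  have "continuous_on {0..1} (\<lambda>x. majority_prob k ((1-p)*x))"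
    by (intro continuous_on_compose2[OF majority_prob_continuous_on] continuous_intros) auto
  then show ?thesis by (rule continuous_on_eq) (use p in \<open>simp add: F_eq\<close>)
qed

end

text \<open>The witness \<open>\<phi>m\<close> is the repelling fixed point \<open>\<phi>\<^sup>-\<close>.\<close>
lemma phi_plus_attracting:
  assumes k: "odd k" "3 \<le> k" and p: "0 \<le> p" "p < p_star k"
  obtains \<phi>m where "0 < \<phi>m" "\<phi>m < phi_plus p k" "phi_plus p k \<le> 1"
    "\<And>x. \<phi>m < x \<Longrightarrow> x < phi_plus p k \<Longrightarrow> x < F p k x"
    "\<And>x. phi_plus p k < x \<Longrightarrow> x \<le> 1 \<Longrightarrow> F p k x < x"
proof -
  interpret odd_majority k "k div 2"
    using k by (rule odd_majorityI)
  have p_crit: "p < p_crit" and p1: "p < 1"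
    using p p_star_eq_p_crit p_crit_bounds by auto
  obtain y1 y2 where y: "0 < y1" "y1 < y_crit" "y_crit < y2" "y2 \<le> 1 - p"
    and ratio_y: "ratio y1 = 1/(1-p)" "ratio y2 = 1/(1-p)"
    and fix_p: "fixpoints p k = {0, y1/(1-p), y2/(1-p)}"
    using fixpoints_below_p_crit[OF p(1) p_crit] by blast
  have y_div: "0 < y1/(1-p)" "y1/(1-p) < y2/(1-p)" "y2/(1-p) \<le> 1"
    using y p1 by (auto simp: divide_strict_right_mono)
  then have phi: "phi_plus p k = y2/(1-p)"
    unfolding phi_plus_def fix_p by (intro Max_eqI) auto
  show ?thesis
  proof (rule that[of "y1/(1-p)"])
    fix x assume x: "y1/(1-p) < x" "x < phi_plus p k"
    then have "y1 < (1-p)*x" "(1-p)*x < y2" using p1 phi by (auto simp: field_simps)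
    then have "ratio ((1-p)*x) > 1/(1-p)"
      using ratio_strict_mono[of y1 "(1-p)*x"] ratio_strict_antimono[of "(1-p)*x" y2] y ratio_y p
      by (cases "(1-p)*x \<le> y_crit") auto
    then show "x < F p k x" using F_gt_self_iff[of p x] p p1 x y_div phi by auto
  next
    fix x assume x: "phi_plus p k < x" "x \<le> 1"
    have "(1-p)*x \<le> 1" using p x y_div phi by (intro mult_le_one) auto
    moreover have "y2 < (1-p)*x" using x p1 phi by (simp add: field_simps)
    ultimately have "ratio ((1-p)*x) < 1/(1-p)"
      using ratio_strict_antimono[of y2 "(1-p)*x"] y ratio_y by auto
    then show "F p k x < x" using F_lt_self_iff[of p x] p p1 x y_div phi by auto
  qed (use y_div phi in auto)
qed

lemma continuous_on_descent_uniform: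
  fixes f :: "real \<Rightarrow> real"
  assumes "continuous_on {b..1} f" and descent: "\<And>x. b \<le> x \<Longrightarrow> x \<le> 1 \<Longrightarrow> f x < x"
  obtains \<eta> where "\<eta> > 0" "\<And>x. b \<le> x \<Longrightarrow> x \<le> 1 \<Longrightarrow> f x \<le> x - \<eta>"
proof (cases "b \<le> 1")
  case True
  have cont: "continuous_on {b..1} (\<lambda>x. x - f x)"
    using assms(1) by (intro continuous_intros)
  obtain x0 where x0: "x0 \<in> {b..1}" and min: "\<And>x. x \<in> {b..1} \<Longrightarrow> x0 - f x0 \<le> x - f x"
    using continuous_attains_inf[OF compact_Icc _ cont] True by auto
  show ?thesis
    by (rule that[of "x0 - f x0"]) (use x0 min descent[of x0] in \<open>auto, fastforce\<close>)
next
  case False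
  then show ?thesis by (intro that[of 1]) auto
qed

lemma shrinking_envelope:
  fixes f :: "real \<Rightarrow> real"
  assumes "\<eta> > 0" "\<epsilon> \<le> \<eta>/2" and descent: "\<And>x. b \<le> x \<Longrightarrow> x \<le> 1 \<Longrightarrow> f x \<le> x - \<eta>"
  obtains h :: "nat \<Rightarrow> real" and T where "h 0 = 1" "\<And>t. h t \<le> 1"
    "\<And>t. min 1 (f (h t) + \<epsilon>) \<le> h (Suc t)" "\<And>t. T \<le> t \<Longrightarrow> h t \<le> b"
proof
  define h where "h t = min 1 (max b (1 - real t * \<eta>/2))" for t
  show "h 0 = 1" "h t \<le> 1" for t by (auto simp: h_def)
  show "min 1 (f (h t) + \<epsilon>) \<le> h (Suc t)" for t
  proof (cases "h (Suc t) = 1")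
    case False
    then have "b < 1" "b \<le> h t" "h t \<le> max b (1 - real t * \<eta>/2)" "h t \<le> 1" by (auto simp: h_def)
    then have "f (h t) + \<epsilon> \<le> max b (1 - real t * \<eta>/2) - \<eta>/2"
      using descent[of "h t"] assms(2) by linarith
    also have "\<dots> \<le> h (Suc t)"
    proof -
      have "max b Y - \<eta>/2 \<le> min 1 (max b (Y - \<eta>/2))" if "Y \<le> 1" for Y
        using that \<open>b < 1\<close> \<open>\<eta> > 0\<close> by (simp add: max_def min_def)
      moreover have "1 - real (Suc t) * \<eta>/2 = (1 - real t * \<eta>/2) - \<eta>/2" by (simp add: algebra_simps)
      ultimately show ?thesis using \<open>\<eta> > 0\<close> unfolding h_def by simp
    qed
    finally show ?thesis by simp
  qed simp
  show "h t \<le> b" if "nat \<lceil>2*(1-b)/\<eta>\<rceil> \<le> t" for t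
  proof -
    have "2*(1-b)/\<eta> \<le> real t" using that by linarith
    then have "1 - real t * \<eta>/2 \<le> b" using \<open>\<eta> > 0\<close> by (simp add: field_simps)
    then show ?thesis by (simp add: h_def)
  qed
qed

text \<open>The red fractions of round \<open>t\<close> will be kept in \<open>[a, h t]\<close>; the slack \<open>\<epsilon>\<close> absorbs the
  sampling error of one round.\<close>
lemma envelope_exists:
  assumes k: "odd k" "3 \<le> k" and p: "0 \<le> p" "p < p_star k" and "\<gamma> > 0"
  obtains a \<epsilon> and h :: "nat \<Rightarrow> real" and T where
    "0 \<le> a" "phi_plus p k - \<gamma> \<le> a" "0 < \<epsilon>" "a + \<epsilon> \<le> F p k a"
    "h 0 = 1" "\<And>t. h t \<le> 1" "\<And>t. min 1 (F p k (h t) + \<epsilon>) \<le> h (Suc t)"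
    "\<And>t. T \<le> t \<Longrightarrow> h t \<le> phi_plus p k + \<gamma>"
proof -
  define \<phi> where "\<phi> = phi_plus p k"
  have p1: "p \<le> 1" using p p_star_less_half[OF k] by simp
  obtain \<phi>m where \<phi>m: "0 < \<phi>m" "\<phi>m < \<phi>" "\<phi> \<le> 1"
    and up: "\<And>x. \<phi>m < x \<Longrightarrow> x < \<phi> \<Longrightarrow> x < F p k x"
    and down: "\<And>x. \<phi> < x \<Longrightarrow> x \<le> 1 \<Longrightarrow> F p k x < x"
    using phi_plus_attracting[OF k p] unfolding \<phi>_def by blast
  define a where "a = max ((\<phi>m + \<phi>)/2) (\<phi> - \<gamma>/2)"
  have a: "\<phi>m < a" "a < \<phi>" "\<phi> - \<gamma> \<le> a"
    using \<phi>m \<open>\<gamma> > 0\<close> by (auto simp: a_def less_max_iff_disj)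
  define b where "b = \<phi> + \<gamma>/2"
  have cont: "continuous_on {b..1} (F p k)"
    using continuous_on_subset[OF F_continuous_on[OF k p(1) p1]] \<phi>m \<open>\<gamma> > 0\<close> by (auto simp: b_def)
  obtain \<eta> where \<eta>: "\<eta> > 0" and descent: "\<And>x. b \<le> x \<Longrightarrow> x \<le> 1 \<Longrightarrow> F p k x \<le> x - \<eta>"
    by (rule continuous_on_descent_uniform[OF cont]) (use down \<open>\<gamma> > 0\<close> in \<open>auto simp: b_def\<close>)
  define \<epsilon> where "\<epsilon> = min ((F p k a - a)/2) (\<eta>/2)"
  have \<epsilon>: "0 < \<epsilon>" "a + \<epsilon> \<le> F p k a" "\<epsilon> \<le> \<eta>/2"
    using up[of a] a \<eta> by (auto simp: \<epsilon>_def min_def field_simps)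
  obtain h T where h: "h 0 = 1" "\<And>t. h t \<le> 1" "\<And>t. min 1 (F p k (h t) + \<epsilon>) \<le> h (Suc t)"
    and h_T: "\<And>t. T \<le> t \<Longrightarrow> h t \<le> b"
    using shrinking_envelope[OF \<eta> \<epsilon>(3) descent] by metis
  show ?thesis
  proof (rule that[of a \<epsilon> h T])
    show "h t \<le> phi_plus p k + \<gamma>" if "T \<le> t" for t
      using h_T[OF that] \<open>\<gamma> > 0\<close> by (simp add: b_def \<phi>_def)
  qed (use a \<phi>m \<epsilon> h in \<open>auto simp: \<phi>_def\<close>)
qed

definition nbr_frac :: "(nat \<Rightarrow> nat set) \<Rightarrow> nat set \<Rightarrow> nat \<Rightarrow> real" where
  "nbr_frac N R u = real (card (N u \<inter> R)) / real (card (N u))"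

lemma nbr_frac_bounds: "finite (N u) \<Longrightarrow> 0 \<le> nbr_frac N R u \<and> nbr_frac N R u \<le> 1"
  unfolding nbr_frac_def by (cases "card (N u) = 0") (auto simp: divide_le_eq_1 card_mono)

lemma bool_pmf_eq_bernoulli: "q = bernoulli_pmf (pmf q True)"
proof (rule pmf_eqI)
  fix b :: bool
  show "pmf q b = pmf (bernoulli_pmf (pmf q True)) b"
    by (cases b) (simp_all add: pmf_False_conv_True pmf_le_1)
qed

lemma expectation_indicator_True:
  "measure_pmf.expectation q (\<lambda>b. if b then 1 else 0 :: real) = pmf q True"
  by (subst (1) bool_pmf_eq_bernoulli) (simp add: integral_bernoulli_pmf pmf_le_1)

lemma sample_seen_R_eq_bernoulli:
  assumes "finite (N u)" "N u \<noteq> {}" "0 \<le> p" "p \<le> 1"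
  shows "sample_seen_R N p R u = bernoulli_pmf ((1-p) * nbr_frac N R u)"
proof -
  have "pmf (sample_seen_R N p R u) True = (1-p) * nbr_frac N R u"
    unfolding sample_seen_R_def nbr_frac_def using assms
    by (simp add: pmf_bind integral_pmf_of_set integral_bernoulli_pmf pmf_return indicator_def)
  then show ?thesis by (metis bool_pmf_eq_bernoulli)
qed

lemma node_update_eq_bernoulli:
  assumes "odd k" "finite (N u)" "N u \<noteq> {}" "0 \<le> p" "p \<le> 1"
  shows "node_update N k p R u = bernoulli_pmf (F p k (nbr_frac N R u))"
proof -
  define q where "q = (1-p) * nbr_frac N R u"
  have q: "q \<in> {0..1}"
    using assms nbr_frac_bounds[of N u R] unfolding q_def by (auto intro: mult_le_one)
  have minority: "card {i\<in>{..<k}. \<not> f i} = k - card {i\<in>{..<k}. f i}" for f :: "nat \<Rightarrow> bool"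
  proof -
    have "{i\<in>{..<k}. \<not> f i} = {..<k} - {i\<in>{..<k}. f i}" by auto
    moreover have "card ({..<k} - {i\<in>{..<k}. f i}) = card {..<k} - card {i\<in>{..<k}. f i}"
      by (rule card_Diff_subset) auto
    ultimately show ?thesis by simp
  qed
  have "node_update N k p R u = map_pmf (\<lambda>c. k - c < c)
      (map_pmf (\<lambda>f. card {i\<in>{..<k}. f i}) (Pi_pmf {..<k} False (\<lambda>_. bernoulli_pmf q)))"
    unfolding node_update_def sample_seen_R_eq_bernoulli[of N u p R, OF assms(2-5)] q_def minority
    by (simp add: map_pmf_comp)
  also have "\<dots> = map_pmf (\<lambda>c. k - c < c) (binomial_pmf k q)"
    using binomial_pmf_altdef'[of "{..<k}" k q False] q by simp
  finally have "pmf (node_update N k p R u) True = measure_pmf.prob (binomial_pmf k q) {c. k - c < c}"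
    by (simp add: pmf_map vimage_def)
  also have "{c. k - c < c} = {j. real j \<ge> (real k + 1) / 2}"
    using \<open>odd k\<close> by (auto elim!: oddE)
  finally show ?thesis unfolding F_def q_def by (metis bool_pmf_eq_bernoulli)
qed

lemma Pi_pmf_count_deviation:
  fixes D :: "'a \<Rightarrow> bool pmf"
  assumes "finite A" "I \<subseteq> A" "I \<noteq> {}" "\<epsilon> \<ge> 0"
  shows "measure_pmf.prob (Pi_pmf A False D)
     {g. \<bar>real (card {v\<in>I. g v}) - (\<Sum>v\<in>I. pmf (D v) True)\<bar> \<ge> \<epsilon>} \<le> 2 * exp (-2 * \<epsilon>\<^sup>2 / real (card I))"
proof -
  let ?M = "measure_pmf (Pi_pmf A False D)"
  let ?X = "\<lambda>v (g :: 'a \<Rightarrow> bool). if g v then 1 else (0::real)"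
  have I: "finite I" using assms finite_subset by blast
  have mean: "measure_pmf.expectation (Pi_pmf A False D) (?X v) = pmf (D v) True" if "v \<in> I" for v
  proof -
    have "map_pmf (\<lambda>g. g v) (Pi_pmf A False D) = D v"
      using Pi_pmf_component[OF assms(1), of v False D] that assms(2) by auto
    then show ?thesis
      using expectation_indicator_True[of "D v"]
        integral_map_pmf[of "\<lambda>g. g v" "Pi_pmf A False D" "\<lambda>b. if b then 1 else 0 :: real"]
      by simp
  qed
  have "prob_space.indep_vars ?M (\<lambda>_. count_space UNIV) (\<lambda>v g. g v) A"
    by (rule indep_vars_Pi_pmf[OF assms(1)])
  then have indep: "prob_space.indep_vars ?M (\<lambda>_. count_space UNIV) (\<lambda>v g. g v) I"
    by (rule prob_space.indep_vars_subset[OF measure_pmf.prob_space_axioms _ assms(2)])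
  have "prob_space.indep_vars ?M (\<lambda>_. borel) ?X I"
    using prob_space.indep_vars_compose2[OF measure_pmf.prob_space_axioms indep,
        of "\<lambda>_ b. if b then 1 else (0::real)" "\<lambda>_. borel"]
    by simp
  then interpret Hoeffding_ineq ?M I ?X "\<lambda>_. 0" "\<lambda>_. 1"
      "\<Sum>v\<in>I. measure_pmf.expectation (Pi_pmf A False D) (?X v)"
    using I by unfold_locales auto
  have "measure_pmf.prob (Pi_pmf A False D)
      {g \<in> space ?M. \<epsilon> \<le> \<bar>(\<Sum>v\<in>I. ?X v g) - (\<Sum>v\<in>I. measure_pmf.expectation (Pi_pmf A False D) (?X v))\<bar>}
      \<le> 2 * exp (-2 * \<epsilon>\<^sup>2 / (\<Sum>v\<in>I. (1 - 0)\<^sup>2))"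
    using I assms(3,4) by (intro Hoeffding_ineq_abs_ge) (auto simp: card_gt_0_iff)
  moreover have "(\<Sum>v\<in>I. ?X v g) = real (card {v\<in>I. g v})" for g
    using I by (simp add: sum.If_cases Int_def)
  ultimately show ?thesis using mean by simp
qed

lemma is_graph_nbrs:
  assumes "is_graph n N" "u \<in> {1..n}"
  shows "N u \<subseteq> {1..n}" "finite (N u)"
proof -
  show "N u \<subseteq> {1..n}" using assms unfolding is_graph_def by blast
  then show "finite (N u)" using finite_subset by blast
qed

lemma em_step_eq_Pi_bernoulli:
  assumes G: "is_graph n N" and ne: "\<And>u. u \<in> {1..n} \<Longrightarrow> N u \<noteq> {}"
    and "odd k" "0 \<le> p" "p \<le> 1"
  shows "em_step n N k p R = map_pmf (\<lambda>g. {u\<in>{1..n}. g u})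
           (Pi_pmf {1..n} False (\<lambda>u. bernoulli_pmf (F p k (nbr_frac N R u))))"
  unfolding em_step_def using assms is_graph_nbrs[OF G]
  by (intro arg_cong[where f="map_pmf _"] Pi_pmf_cong) (auto simp: node_update_eq_bernoulli)

lemma abs_diff_ge_if_ratio_outside:
  fixes c \<delta> \<mu> :: real
  assumes "0 < \<delta>" "\<delta> * lo \<le> \<mu>" "\<mu> \<le> \<delta> * hi" "c / \<delta> < lo - \<epsilon> \<or> hi + \<epsilon> < c / \<delta>"
  shows "\<epsilon> * \<delta> \<le> \<bar>c - \<mu>\<bar>"
proof -
  have "c < (lo - \<epsilon>) * \<delta> \<or> (hi + \<epsilon>) * \<delta> < c"
    using assms(1,4) by (simp only: pos_divide_less_eq pos_less_divide_eq)
  then show ?thesis using assms(2,3) by (auto simp: algebra_simps)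
qed

lemma em_step_nbr_frac_deviation_prob_le:
  fixes d :: nat
  assumes G: "is_graph n N" and deg: "\<And>u. u \<in> {1..n} \<Longrightarrow> d \<le> card (N u)" and "d > 0"
    and k: "odd k" "3 \<le> k" and p: "0 \<le> p" "p \<le> 1"
    and "0 \<le> lo" "hi \<le> 1" and R: "\<And>v. v \<in> {1..n} \<Longrightarrow> lo \<le> nbr_frac N R v \<and> nbr_frac N R v \<le> hi"
    and "\<epsilon> > 0" and u: "u \<in> {1..n}"
  shows "measure_pmf.prob (em_step n N k p R)
           {R'. nbr_frac N R' u < F p k lo - \<epsilon> \<or> nbr_frac N R' u > F p k hi + \<epsilon>}
         \<le> 2 * exp (-2 * \<epsilon>\<^sup>2 * real d)"
proof -
  note nbrs = is_graph_nbrs[OF G]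
  have ne: "N v \<noteq> {}" "real (card (N v)) > 0" if "v \<in> {1..n}" for v
    using deg[OF that] \<open>d > 0\<close> by auto
  define D where "D v = bernoulli_pmf (F p k (nbr_frac N R v))" for v
  define S where "S g = {v\<in>{1..n}. g v}" for g :: "nat \<Rightarrow> bool"
  define \<mu> where "\<mu> = (\<Sum>v\<in>N u. pmf (D v) True)"
  have step: "em_step n N k p R = map_pmf S (Pi_pmf {1..n} False D)"
    unfolding S_def[abs_def] D_def[abs_def] using ne by (intro em_step_eq_Pi_bernoulli[OF G _ k(1) p])
  have "F p k lo \<le> pmf (D v) True \<and> pmf (D v) True \<le> F p k hi" if "v \<in> N u" for v
  proof -
    have v: "v \<in> {1..n}" using nbrs(1)[OF u] that by blast
    then have "0 \<le> nbr_frac N R v" "nbr_frac N R v \<le> 1"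
      using nbr_frac_bounds[of N v R, OF nbrs(2)[OF v]] by auto
    then show ?thesis
      unfolding D_def using R[OF v] F_bounds[OF k p] F_mono[OF k p] \<open>0 \<le> lo\<close> \<open>hi \<le> 1\<close> by auto
  qed
  then have "(\<Sum>v\<in>N u. F p k lo) \<le> \<mu>" "\<mu> \<le> (\<Sum>v\<in>N u. F p k hi)"
    unfolding \<mu>_def by (intro sum_mono; blast)+
  then have \<mu>: "card (N u) * F p k lo \<le> \<mu>" "\<mu> \<le> card (N u) * F p k hi" by simp_all
  have "S -` {R'. nbr_frac N R' u < F p k lo - \<epsilon> \<or> nbr_frac N R' u > F p k hi + \<epsilon>}
      \<subseteq> {g. \<bar>real (card {v\<in>N u. g v}) - \<mu>\<bar> \<ge> \<epsilon> * card (N u)}"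
  proof
    fix g assume g: "g \<in> S -` {R'. nbr_frac N R' u < F p k lo - \<epsilon> \<or> nbr_frac N R' u > F p k hi + \<epsilon>}"
    have "N u \<inter> S g = {v\<in>N u. g v}" using nbrs(1)[OF u] unfolding S_def by auto
    with g have "card {v\<in>N u. g v} / card (N u) < F p k lo - \<epsilon>
        \<or> F p k hi + \<epsilon> < card {v\<in>N u. g v} / card (N u)"
      unfolding nbr_frac_def by auto
    with \<mu> ne(2)[OF u] show "g \<in> {g. \<bar>real (card {v\<in>N u. g v}) - \<mu>\<bar> \<ge> \<epsilon> * card (N u)}"
      using abs_diff_ge_if_ratio_outside[of "card (N u)"] by (simp add: mult.commute)
  qed
  then have "measure_pmf.prob (em_step n N k p R)
        {R'. nbr_frac N R' u < F p k lo - \<epsilon> \<or> nbr_frac N R' u > F p k hi + \<epsilon>}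
      \<le> measure_pmf.prob (Pi_pmf {1..n} False D) {g. \<bar>real (card {v\<in>N u. g v}) - \<mu>\<bar> \<ge> \<epsilon> * card (N u)}"
    unfolding step measure_map_pmf by (rule measure_pmf.finite_measure_mono) simp
  also have "\<dots> \<le> 2 * exp (-2 * (\<epsilon> * card (N u))\<^sup>2 / card (N u))"
    unfolding \<mu>_def using nbrs[OF u] ne[OF u] \<open>\<epsilon> > 0\<close> by (intro Pi_pmf_count_deviation) auto
  also have "\<dots> \<le> 2 * exp (-2 * \<epsilon>\<^sup>2 * real d)"
    using deg[OF u] ne[OF u] \<open>\<epsilon> > 0\<close> by (simp add: power2_eq_square)
  finally show ?thesis .
qed

lemma em_step_concentration:
  fixes d :: nat
  assumes "is_graph n N" "\<And>u. u \<in> {1..n} \<Longrightarrow> d \<le> card (N u)" "d > 0"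
    and "odd k" "3 \<le> k" "0 \<le> p" "p \<le> 1"
    and "0 \<le> lo" "hi \<le> 1" "\<And>v. v \<in> {1..n} \<Longrightarrow> lo \<le> nbr_frac N R v \<and> nbr_frac N R v \<le> hi"
    and "\<epsilon> > 0"
  shows "measure_pmf.prob (em_step n N k p R)
           {R'. \<exists>u\<in>{1..n}. nbr_frac N R' u < F p k lo - \<epsilon> \<or> nbr_frac N R' u > F p k hi + \<epsilon>}
         \<le> real n * (2 * exp (-2 * \<epsilon>\<^sup>2 * real d))"
proof -
  have "{R'. \<exists>u\<in>{1..n}. nbr_frac N R' u < F p k lo - \<epsilon> \<or> nbr_frac N R' u > F p k hi + \<epsilon>}
      = (\<Union>u\<in>{1..n}. {R'. nbr_frac N R' u < F p k lo - \<epsilon> \<or> nbr_frac N R' u > F p k hi + \<epsilon>})"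
    by blast
  moreover have "measure_pmf.prob (em_step n N k p R)
      (\<Union>u\<in>{1..n}. {R'. nbr_frac N R' u < F p k lo - \<epsilon> \<or> nbr_frac N R' u > F p k hi + \<epsilon>})
    \<le> (\<Sum>u\<in>{1..n}. measure_pmf.prob (em_step n N k p R)
          {R'. nbr_frac N R' u < F p k lo - \<epsilon> \<or> nbr_frac N R' u > F p k hi + \<epsilon>})"
    by (rule measure_UNION_le) auto
  moreover have "\<dots> \<le> (\<Sum>u\<in>{1..n}. 2 * exp (-2 * \<epsilon>\<^sup>2 * real d))"
    using em_step_nbr_frac_deviation_prob_le[OF assms] by (intro sum_mono)
  ultimately show ?thesis by simp
qed

lemma em_traj_length: "xs \<in> set_pmf (em_traj n N k p M) \<Longrightarrow> length xs = Suc M"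
  by (induction M arbitrary: xs) auto

lemma snoc_preimage_first_failure:
  assumes "length xs = Suc M" "\<And>t. t \<le> M \<Longrightarrow> Good t (xs!t)"
  shows "(\<lambda>y. xs @ [y]) -` {ys. \<exists>t\<le>Suc M. \<not> Good t (ys!t)} = {y. \<not> Good (Suc M) y}"
proof -
  have "(xs @ [y]) ! t = (if t = Suc M then y else xs ! t)" if "t \<le> Suc M" for t y
    using assms(1) that by (auto simp: nth_append)
  then show ?thesis using assms(2) by (auto simp: le_Suc_eq)
qed

lemma em_traj_bad_emeasure_le:
  fixes Good :: "nat \<Rightarrow> nat set \<Rightarrow> bool"
  assumes "Good 0 {1..n}"
    and step: "\<And>t R. Good t R \<Longrightarrow> measure_pmf.prob (em_step n N k p R) {R'. \<not> Good (Suc t) R'} \<le> \<beta>"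
    and "\<beta> \<ge> 0"
  shows "emeasure (measure_pmf (em_traj n N k p M)) {xs. \<exists>t\<le>M. \<not> Good t (xs!t)} \<le> real M * \<beta>"
proof (induction M)
  case 0
  show ?case using \<open>Good 0 {1..n}\<close> by (simp add: indicator_def)
next
  case (Suc M)
  define Bad where "Bad M = {xs. \<exists>t\<le>M. \<not> Good t (xs!t)}" for M
  have extend: "emeasure (measure_pmf (map_pmf (\<lambda>y. xs @ [y]) (em_step n N k p (last xs)))) (Bad (Suc M))
       \<le> indicator (Bad M) xs + ennreal \<beta>" if xs: "xs \<in> set_pmf (em_traj n N k p M)" for xs
  proof (cases "xs \<in> Bad M")
    case True
    then show ?thesis by (simp add: measure_pmf.emeasure_le_1 add_increasing2)
  next
    case False
    then have good: "Good t (xs!t)" if "t \<le> M" for t using that unfolding Bad_def by auto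
    have len: "length xs = Suc M" using em_traj_length[OF xs] .
    then have "(\<lambda>y. xs @ [y]) -` Bad (Suc M) = {R'. \<not> Good (Suc M) R'}"
      unfolding Bad_def using good by (rule snoc_preimage_first_failure)
    moreover have "last xs = xs ! M" using len by (cases xs rule: rev_cases) auto
    ultimately have "emeasure (measure_pmf (map_pmf (\<lambda>y. xs @ [y]) (em_step n N k p (last xs)))) (Bad (Suc M))
        \<le> ennreal \<beta>"
      using step[OF good[of M]] by (simp add: measure_pmf.emeasure_eq_measure ennreal_leI)
    then show ?thesis by (simp add: add_increasing)
  qed
  have "emeasure (measure_pmf (em_traj n N k p (Suc M))) (Bad (Suc M))
      = (\<integral>\<^sup>+xs. emeasure (measure_pmf (map_pmf (\<lambda>y. xs @ [y]) (em_step n N k p (last xs)))) (Bad (Suc M))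
          \<partial>measure_pmf (em_traj n N k p M))"
    by simp
  also have "\<dots> \<le> (\<integral>\<^sup>+xs. indicator (Bad M) xs + ennreal \<beta> \<partial>measure_pmf (em_traj n N k p M))"
    by (rule nn_integral_mono_AE) (rule AE_pmfI, rule extend)
  also have "\<dots> = emeasure (measure_pmf (em_traj n N k p M)) (Bad M) + ennreal \<beta>"
    by (subst nn_integral_add) (auto simp: measure_pmf.emeasure_space_1)
  also have "\<dots> \<le> ennreal (real M * \<beta>) + ennreal \<beta>"
    using Suc.IH unfolding Bad_def by (intro add_right_mono) simp
  also have "\<dots> = ennreal (real (Suc M) * \<beta>)"
    using \<open>\<beta> \<ge> 0\<close> by (simp add: ennreal_plus[symmetric] algebra_simps del: ennreal_plus)
  finally show ?case unfolding Bad_def .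
qed

lemma em_traj_all_good_prob_ge:
  fixes Good :: "nat \<Rightarrow> nat set \<Rightarrow> bool"
  assumes "Good 0 {1..n}"
    and "\<And>t R. Good t R \<Longrightarrow> measure_pmf.prob (em_step n N k p R) {R'. \<not> Good (Suc t) R'} \<le> \<beta>"
    and "\<beta> \<ge> 0"
  shows "measure_pmf.prob (em_traj n N k p M) {xs. \<forall>t\<le>M. Good t (xs!t)} \<ge> 1 - real M * \<beta>"
proof -
  have "measure_pmf.prob (em_traj n N k p M) {xs. \<exists>t\<le>M. \<not> Good t (xs!t)} \<le> real M * \<beta>"
    using em_traj_bad_emeasure_le[OF assms, of M] \<open>\<beta> \<ge> 0\<close> by (simp add: measure_pmf.emeasure_eq_measure)
  moreover have "{xs. \<forall>t\<le>M. Good t (xs!t)} = UNIV - {xs. \<exists>t\<le>M. \<not> Good t (xs!t)}" by auto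
  ultimately show ?thesis
    using measure_pmf.prob_compl[of "{xs. \<exists>t\<le>M. \<not> Good t (xs!t)}" "em_traj n N k p M"] by simp
qed

lemma vol_eq_sum_nbrs_inter:
  assumes G: "is_graph n N" and R: "R \<subseteq> {1..n}"
  shows "vol N R = (\<Sum>u\<in>{1..n}. real (card (N u \<inter> R)))"
proof -
  have R_fin: "finite R" using R finite_subset by blast
  have nbrs: "{u\<in>{1..n}. v \<in> N u} = N v" if "v \<in> R" for v
    using G that R unfolding is_graph_def by blast
  have "(\<Sum>u\<in>{1..n}. real (card (N u \<inter> R))) = (\<Sum>u\<in>{1..n}. \<Sum>v\<in>R. if v \<in> N u then 1 else 0)"
    using R_fin by (simp add: sum.If_cases Int_def conj_commute)
  also have "\<dots> = (\<Sum>v\<in>R. \<Sum>u\<in>{1..n}. if v \<in> N u then 1 else 0)"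
    by (rule sum.swap)
  also have "\<dots> = (\<Sum>v\<in>R. real (card (N v)))"
    using nbrs by (simp add: sum.If_cases Int_def)
  finally show ?thesis unfolding vol_def degree_def ..
qed

lemma vol_ratio_bounds:
  assumes G: "is_graph n N" and "R \<subseteq> {1..n}" and "0 < vol N {1..n}"
    and bounds: "\<And>u. u \<in> {1..n} \<Longrightarrow> lo \<le> nbr_frac N R u \<and> nbr_frac N R u \<le> hi"
  shows "lo \<le> vol N R / vol N {1..n} \<and> vol N R / vol N {1..n} \<le> hi"
proof -
  have weighted: "real (card (N u \<inter> R)) = real (card (N u)) * nbr_frac N R u" if "u \<in> {1..n}" for u
    using is_graph_nbrs(2)[OF G that] unfolding nbr_frac_def
    by (cases "card (N u) = 0") auto
  have vol_R: "vol N R = (\<Sum>u\<in>{1..n}. real (card (N u)) * nbr_frac N R u)"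
    unfolding vol_eq_sum_nbrs_inter[OF G assms(2)] using weighted by simp
  have vol_V: "c * vol N {1..n} = (\<Sum>u\<in>{1..n}. real (card (N u)) * c)" for c
    unfolding vol_def degree_def by (simp add: sum_distrib_left mult.commute)
  have "lo * vol N {1..n} \<le> vol N R" "vol N R \<le> hi * vol N {1..n}"
    unfolding vol_R vol_V using bounds by (auto intro!: sum_mono mult_left_mono)
  with \<open>0 < vol N {1..n}\<close> show ?thesis by (simp add: field_simps)
qed

definition in_envelope :: "nat \<Rightarrow> (nat \<Rightarrow> nat set) \<Rightarrow> real \<Rightarrow> real \<Rightarrow> nat set \<Rightarrow> bool" where
  "in_envelope n N lo hi R \<longleftrightarrow> R \<subseteq> {1..n} \<and> (\<forall>u\<in>{1..n}. lo \<le> nbr_frac N R u \<and> nbr_frac N R u \<le> hi)"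

lemma em_step_leaves_envelope_prob_le:
  fixes d :: nat
  assumes G: "is_graph n N" and deg: "\<And>u. u \<in> {1..n} \<Longrightarrow> d \<le> card (N u)" and "d > 0"
    and k: "odd k" "3 \<le> k" and p: "0 \<le> p" "p \<le> 1" and "\<epsilon> > 0"
    and "0 \<le> lo" "hi \<le> 1" and lo': "lo' \<le> F p k lo - \<epsilon>" and hi': "min 1 (F p k hi + \<epsilon>) \<le> hi'"
    and R: "in_envelope n N lo hi R"
  shows "measure_pmf.prob (em_step n N k p R) {R'. \<not> in_envelope n N lo' hi' R'}
    \<le> real n * (2 * exp (-2 * \<epsilon>\<^sup>2 * real d))"
proof -
  let ?Out = "{R'. \<exists>u\<in>{1..n}. nbr_frac N R' u < F p k lo - \<epsilon> \<or> nbr_frac N R' u > F p k hi + \<epsilon>}"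
  have sub: "{R'. \<not> in_envelope n N lo' hi' R'} \<inter> set_pmf (em_step n N k p R) \<subseteq> ?Out"
  proof
    fix R' assume "R' \<in> {R'. \<not> in_envelope n N lo' hi' R'} \<inter> set_pmf (em_step n N k p R)"
    then have out: "\<not> in_envelope n N lo' hi' R'" and "R' \<subseteq> {1..n}" unfolding em_step_def by auto
    with out obtain u where u: "u \<in> {1..n}" "\<not> (lo' \<le> nbr_frac N R' u \<and> nbr_frac N R' u \<le> hi')"
      unfolding in_envelope_def by blast
    moreover have "nbr_frac N R' u \<le> 1"
      using nbr_frac_bounds[of N u R', OF is_graph_nbrs(2)[OF G u(1)]] by blast
    ultimately have "nbr_frac N R' u < F p k lo - \<epsilon> \<or> nbr_frac N R' u > F p k hi + \<epsilon>"
      using lo' hi' by linarith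
    with u(1) show "R' \<in> ?Out" by blast
  qed
  have "measure_pmf.prob (em_step n N k p R) {R'. \<not> in_envelope n N lo' hi' R'}
      = measure_pmf.prob (em_step n N k p R) ({R'. \<not> in_envelope n N lo' hi' R'} \<inter> set_pmf (em_step n N k p R))"
    by (simp add: measure_Int_set_pmf)
  also have "\<dots> \<le> measure_pmf.prob (em_step n N k p R) ?Out"
    by (rule measure_pmf.finite_measure_mono[OF sub]) simp
  also have "\<dots> \<le> real n * (2 * exp (-2 * \<epsilon>\<^sup>2 * real d))"
    by (rule em_step_concentration[OF G deg \<open>d > 0\<close> k p \<open>0 \<le> lo\<close> \<open>hi \<le> 1\<close> _ \<open>\<epsilon> > 0\<close>])
      (use R in \<open>auto simp: in_envelope_def\<close>)
  finally show ?thesis .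
qed

lemma em_traj_in_envelope_prob_ge:
  fixes d :: nat and h :: "nat \<Rightarrow> real"
  assumes G: "is_graph n N" and deg: "\<And>u. u \<in> {1..n} \<Longrightarrow> d \<le> card (N u)" and "d > 0"
    and k: "odd k" "3 \<le> k" and p: "0 \<le> p" "p \<le> 1" and "\<epsilon> > 0"
    and "0 \<le> a" and a: "a + \<epsilon> \<le> F p k a"
    and h: "h 0 = 1" "\<And>t. h t \<le> 1" "\<And>t. min 1 (F p k (h t) + \<epsilon>) \<le> h (Suc t)"
  shows "measure_pmf.prob (em_traj n N k p M) {xs. \<forall>t\<le>M. in_envelope n N a (h t) (xs!t)}
    \<ge> 1 - real M * (real n * (2 * exp (-2 * \<epsilon>\<^sup>2 * real d)))"
proof (rule em_traj_all_good_prob_ge)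
  have "nbr_frac N {1..n} u = 1" if "u \<in> {1..n}" for u
    using is_graph_nbrs[OF G that] deg[OF that] \<open>d > 0\<close> by (auto simp: nbr_frac_def Int_absorb2)
  moreover have "a \<le> 1"
    using a \<open>\<epsilon> > 0\<close> measure_pmf.prob_le_1 unfolding F_def by (smt (verit))
  ultimately show "in_envelope n N a (h 0) {1..n}" unfolding in_envelope_def h(1) by auto
next
  fix t R assume R: "in_envelope n N a (h t) R"
  show "measure_pmf.prob (em_step n N k p R) {R'. \<not> in_envelope n N a (h (Suc t)) R'}
      \<le> real n * (2 * exp (-2 * \<epsilon>\<^sup>2 * real d))"
    by (rule em_step_leaves_envelope_prob_le[OF G deg \<open>d > 0\<close> k p \<open>\<epsilon> > 0\<close> \<open>0 \<le> a\<close> h(2) _ h(3)])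
      (use a R in auto)
qed simp

lemma min_degree_le_card: "u \<in> {1..n} \<Longrightarrow> min_degree n N \<le> card (N u)"
  unfolding min_degree_def degree_def by (rule Min_le) auto

lemma em_traj_vol_ratio_prob_ge:
  fixes d :: nat and h :: "nat \<Rightarrow> real"
  assumes G: "is_graph n N" and deg: "\<And>u. u \<in> {1..n} \<Longrightarrow> d \<le> card (N u)" and "d > 0" "n \<ge> 1"
    and k: "odd k" "3 \<le> k" and p: "0 \<le> p" "p \<le> 1" and "\<epsilon> > 0"
    and "0 \<le> a" "a + \<epsilon> \<le> F p k a"
    and h: "h 0 = 1" "\<And>t. h t \<le> 1" "\<And>t. min 1 (F p k (h t) + \<epsilon>) \<le> h (Suc t)"
    and event: "\<And>xs. \<forall>t\<le>M. a \<le> vol N (xs!t) / vol N {1..n} \<and> vol N (xs!t) / vol N {1..n} \<le> h t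
      \<Longrightarrow> xs \<in> E"
  shows "measure_pmf.prob (em_traj n N k p M) E \<ge> 1 - real M * (real n * (2 * exp (-2 * \<epsilon>\<^sup>2 * real d)))"
proof -
  have vol_pos: "0 < vol N {1..n}"
    unfolding vol_def degree_def using deg \<open>d > 0\<close> \<open>n \<ge> 1\<close> by (intro sum_pos) fastforce+
  have "{xs. \<forall>t\<le>M. in_envelope n N a (h t) (xs!t)} \<subseteq> E"
  proof
    fix xs assume "xs \<in> {xs. \<forall>t\<le>M. in_envelope n N a (h t) (xs!t)}"
    then have "a \<le> vol N (xs!t) / vol N {1..n} \<and> vol N (xs!t) / vol N {1..n} \<le> h t" if "t \<le> M" for t
      using that vol_ratio_bounds[OF G _ vol_pos] unfolding in_envelope_def by blast
    then show "xs \<in> E" by (intro event) blast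
  qed
  then have "measure_pmf.prob (em_traj n N k p M) {xs. \<forall>t\<le>M. in_envelope n N a (h t) (xs!t)}
      \<le> measure_pmf.prob (em_traj n N k p M) E"
    by (rule measure_pmf.finite_measure_mono) simp
  moreover have "1 - real M * (real n * (2 * exp (-2 * \<epsilon>\<^sup>2 * real d)))
      \<le> measure_pmf.prob (em_traj n N k p M) {xs. \<forall>t\<le>M. in_envelope n N a (h t) (xs!t)}"
    using deg by (rule em_traj_in_envelope_prob_ge[OF G _ \<open>d > 0\<close> k p \<open>\<epsilon> > 0\<close> \<open>0 \<le> a\<close> \<open>a + \<epsilon> \<le> F p k a\<close> h])
  ultimately show ?thesis by linarith
qed

text \<open>With minimum degree \<open>d \<ge> C log n\<close> the failure probability of one round is
  \<open>2 n exp(-2 \<epsilon>\<^sup>2 d) \<le> 2 n\<^bsup>-(K+2)\<^esup>\<close> for \<open>C = (K+3)/(2 \<epsilon>\<^sup>2)\<close>, which beats a horizon of \<open>O(n\<^sup>K)\<close> rounds.\<close>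
lemma em_traj_vol_ratio_tendsto_1:
  fixes Nb :: "nat \<Rightarrow> nat \<Rightarrow> nat set" and M :: "nat \<Rightarrow> nat" and h :: "nat \<Rightarrow> real"
  assumes graphs: "\<And>n. is_graph n (Nb n)"
    and mindeg: "(\<lambda>n. real (min_degree n (Nb n))) \<in> \<omega>(\<lambda>n. ln (real n))"
    and k: "odd k" "3 \<le> k" and p: "0 \<le> p" "p \<le> 1" and "\<epsilon> > 0"
    and "0 \<le> a" "a + \<epsilon> \<le> F p k a"
    and h: "h 0 = 1" "\<And>t. h t \<le> 1" "\<And>t. min 1 (F p k (h t) + \<epsilon>) \<le> h (Suc t)"
    and "K > 0" and horizon: "\<And>n. real (M n) \<le> c + real n powr K"
    and event: "\<And>n xs. \<forall>t\<le>M n. a \<le> vol (Nb n) (xs!t) / vol (Nb n) {1..n} \<and>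
        vol (Nb n) (xs!t) / vol (Nb n) {1..n} \<le> h t \<Longrightarrow> xs \<in> E n"
  shows "(\<lambda>n. measure_pmf.prob (em_traj n (Nb n) k p (M n)) (E n)) \<longlonglongrightarrow> 1"
proof (rule tendsto_sandwich)
  define C where "C = (K + 3) / (2 * \<epsilon>\<^sup>2)"
  have "C > 0" using \<open>K > 0\<close> \<open>\<epsilon> > 0\<close> by (simp add: C_def)
  have "eventually (\<lambda>n. real (min_degree n (Nb n)) \<ge> C * ln (real n) \<and> n \<ge> 2) sequentially"
    using landau_omega.smallD[OF mindeg \<open>C > 0\<close>] eventually_ge_at_top[of 2]
    by eventually_elim (auto simp: ln_ge_zero)
  then show "eventually (\<lambda>n. 1 - (c + real n powr K) * (real n * (2 * real n powr (-(K+3))))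
      \<le> measure_pmf.prob (em_traj n (Nb n) k p (M n)) (E n)) sequentially"
  proof eventually_elim
    case (elim n)
    define d where "d = min_degree n (Nb n)"
    have "C * ln (real n) > 0" using elim \<open>C > 0\<close> by simp
    then have "d > 0" using elim unfolding d_def by linarith
    have deg: "d \<le> card (Nb n u)" if "u \<in> {1..n}" for u
      unfolding d_def using that by (rule min_degree_le_card)
    have "exp (-2 * \<epsilon>\<^sup>2 * real d) \<le> exp (-(K+3) * ln (real n))"
      using elim \<open>\<epsilon> > 0\<close> unfolding d_def C_def by (simp add: field_simps)
    also have "\<dots> = real n powr (-(K+3))" using elim by (simp add: powr_def)
    finally have "real (M n) * (real n * (2 * exp (-2 * \<epsilon>\<^sup>2 * real d)))
        \<le> (c + real n powr K) * (real n * (2 * real n powr (-(K+3))))"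
      using horizon[of n] by (intro mult_mono) auto
    moreover have "1 - real (M n) * (real n * (2 * exp (-2 * \<epsilon>\<^sup>2 * real d)))
        \<le> measure_pmf.prob (em_traj n (Nb n) k p (M n)) (E n)"
      using elim event
      by (intro em_traj_vol_ratio_prob_ge[OF graphs deg \<open>d > 0\<close> _ k p \<open>\<epsilon> > 0\<close> \<open>0 \<le> a\<close> \<open>a + \<epsilon> \<le> F p k a\<close> h])
        auto
    ultimately show ?case by linarith
  qed
  show "(\<lambda>n. 1 - (c + real n powr K) * (real n * (2 * real n powr (-(K+3))))) \<longlonglongrightarrow> 1"
    using \<open>K > 0\<close> by real_asymp
qed auto

theorem corollary5p4:
  fixes Nb :: "nat \<Rightarrow> nat \<Rightarrow> nat set" and k :: nat and p :: real
  assumes graphs: "\<And>n. is_graph n (Nb n)"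
    and mindeg: "(\<lambda>n. real (min_degree n (Nb n))) \<in> \<omega>(\<lambda>n. ln (real n))"
    and k_odd: "odd k" and k_ge: "k \<ge> 3"
    and p_nonneg: "0 \<le> p" and p_lt: "p < p_star k"
  shows "\<forall>\<gamma>>0. \<exists>T::nat. \<forall>K::real>0.
    (\<lambda>n. measure_pmf.prob (em_traj n (Nb n) k p (max T (nat \<lfloor>real n powr K\<rfloor>)))
       {xs. (\<forall>t<T. vol (Nb n) (xs ! t) / vol (Nb n) {1..n} \<ge> phi_plus p k - \<gamma>) \<and>
            (\<forall>t. T \<le> t \<and> real t \<le> real n powr K \<longrightarrow>
               vol (Nb n) (xs ! t) / vol (Nb n) {1..n} \<in> {phi_plus p k - \<gamma> .. phi_plus p k + \<gamma>})})
    \<longlonglongrightarrow> 1"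
proof (intro allI impI, goal_cases)
  case (1 \<gamma>)
  have k: "odd k" "3 \<le> k" and p: "0 \<le> p" "p \<le> 1"
    using k_odd k_ge p_nonneg p_lt p_star_less_half[OF k_odd k_ge] by auto
  obtain a \<epsilon> h T where a: "0 \<le> a" "phi_plus p k - \<gamma> \<le> a" and \<epsilon>: "0 < \<epsilon>" "a + \<epsilon> \<le> F p k a"
    and h: "h 0 = 1" "\<And>t. h t \<le> 1" "\<And>t. min 1 (F p k (h t) + \<epsilon>) \<le> h (Suc t)"
    and h_T: "\<And>t. T \<le> t \<Longrightarrow> h t \<le> phi_plus p k + \<gamma>"
    using envelope_exists[OF k p_nonneg p_lt \<open>\<gamma> > 0\<close>] by metis
  have horizon: "real (max T (nat \<lfloor>real n powr K\<rfloor>)) \<le> real T + real n powr K" for n :: nat and K :: real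
  proof -
    have "real (nat \<lfloor>real n powr K\<rfloor>) \<le> real n powr K" by (simp add: of_nat_nat)
    then show ?thesis unfolding of_nat_max by linarith
  qed
  show ?case
  proof (rule exI[of _ T], intro allI impI
      em_traj_vol_ratio_tendsto_1[OF graphs mindeg k p \<epsilon>(1) a(1) \<epsilon>(2) h _ horizon], goal_cases)
    case (2 K n xs)
    have "t \<le> max T (nat \<lfloor>real n powr K\<rfloor>)" if "t < T \<or> real t \<le> real n powr K" for t
      using that le_nat_floor[of t "real n powr K"] by auto
    with 2 show ?case using a h_T by fastforce
  qed
qed
end
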